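(* For all $k\in\mathbb N$ the following hold in the $q$-shuffle algebra $\mathbb V$: $$[W_0,W_{k+1}]=[W_{-k},W_1]=(1-q^{-2})(\tilde G_{k+1}-G_{k+1}),$$ $$[W_0,G_{k+1}]_q=[\tilde G_{k+1},W_0]_q=(q-q^{-1})W_{-k-1},$$ $$[G_{k+1},W_1]_q=[W_1,\tilde G_{k+1}]_q=(q-q^{-1})W_{k+2}.$$
   Context: Let $\mathbb F$ be a field and let $q\in\mathbb F$ be nonzero and not a root of unity. Let $\mathbb V$ be the free associative $\mathbb F$-algebra on noncommuting $x,y$, with basis the words (including $1$). Juxtaposition denotes concatenation. Set $\langle x,x\rangle=\langle y,y\rangle=2$ and $\langle x,y\rangle=\langle y,x\rangle=-2$. The $q$-shuffle product $\star$ is the bilinear product determined as follows: - $1\star v=v\star 1=v$; - for nontrivial words $u=u_1\cdots u_r$ and $v=v_1\cdots v_s$, $$u\star v=u_1((u_2\cdots u_r)\star v)+v_1(u\star(v_2\cdots v_s))q^{\langle u_1,v_1\rangle+\cdots+\langle u_r,v_1\rangle}.$$ This makes $\mathbb V$ an associative algebra, the $q$-shuffle algebra. Write $[a,b]=a\star b-b\star a$ and $[a,b]_q=q\,a\star b-q^{-1}b\star a$. For $k\in\mathbb N$: - $W_{-k}=xyx\cdots x$ is the alternating word of length $2k+1$ beginning and ending with $x$; - $W_{k+1}=yxy\cdots y$ is the alternating word of length $2k+1$ beginning and ending with $y$; - $G_k=yxyx\cdots yx$ is the word of length $2k$; - $\tilde G_k=xyxy\cdots xy$ is the word of length $2k$;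 - $G_0=\tilde G_0=1$. *)

theory Defs
  imports Main "HOL-Library.Poly_Mapping"
begin

text \<open>The free associative algebra V on x, y over a field 'a is modelled as the
  finitely supported 'a-valued functions on words (basis = words).\<close>

datatype letter = X | Y

type_synonym word = "letter list"
type_synonym 'a vv = "word \<Rightarrow>\<^sub>0 'a"

definition ip :: "letter \<Rightarrow> letter \<Rightarrow> int" where
  "ip a b = (if a = b then 2 else -2)"

definition wd :: "word \<Rightarrow> 'a::field vv" where
  "wd w = Poly_Mapping.single w 1"

definition scale :: "'a::field \<Rightarrow> 'a vv \<Rightarrow> 'a vv" where
  "scale c p = Poly_Mapping.map (\<lambda>x. c * x) p"

definition prefix :: "letter \<Rightarrow> 'a::field vv \<Rightarrow> 'a vv" where
  "prefix a p = (\<Sum>w\<in>Poly_Mapping.keys p. Poly_Mapping.single (a # w) (Poly_Mapping.lookup p w))"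

fun qsh :: "'a::field \<Rightarrow> word \<Rightarrow> word \<Rightarrow> 'a vv" where
  "qsh q [] v = wd v"
| "qsh q (a # u) [] = wd (a # u)"
| "qsh q (a # u) (b # v) =
     prefix a (qsh q u (b # v))
     + scale (q powi (\<Sum>c\<leftarrow>a # u. ip c b)) (prefix b (qsh q (a # u) v))"

definition star :: "'a::field \<Rightarrow> 'a vv \<Rightarrow> 'a vv \<Rightarrow> 'a vv" where
  "star q p r = (\<Sum>u\<in>Poly_Mapping.keys p. \<Sum>v\<in>Poly_Mapping.keys r. scale (Poly_Mapping.lookup p u * Poly_Mapping.lookup r v) (qsh q u v))"

definition comm :: "'a::field \<Rightarrow> 'a vv \<Rightarrow> 'a vv \<Rightarrow> 'a vv" where
  "comm q a b = star q a b - star q b a"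

definition qcomm :: "'a::field \<Rightarrow> 'a vv \<Rightarrow> 'a vv \<Rightarrow> 'a vv" where
  "qcomm q a b = scale q (star q a b) - scale (inverse q) (star q b a)"

fun alt :: "letter \<Rightarrow> nat \<Rightarrow> word" where
  "alt a 0 = []"
| "alt a (Suc n) = a # alt (if a = X then Y else X) n"

definition W :: "int \<Rightarrow> word" where
  "W i = (if i \<le> 0 then alt X (2 * nat (- i) + 1) else alt Y (2 * nat i - 1))"

definition G :: "nat \<Rightarrow> word" where
  "G k = alt Y (2 * k)"

definition Gt :: "nat \<Rightarrow> word" where
  "Gt k = alt X (2 * k)"

end

theory Submission
  imports Defs
begin

text \<open>All six identities reduce to commutation relations between a single letter and an
  alternating word.  Peeling two letters off the alternating word and expanding the q-shuffle
  with a one-letter word twice, the (q-)commutator at length n+2 becomes a sum of at most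
  four words plus the prefix by those two letters of the (q-)commutator at length n; the
  extra words cancel in pairs because the q-weight of an alternating word of even length
  against any letter is zero, so induction on the length gives the identities.\<close>

lemma lookup_scale [simp]: "Poly_Mapping.lookup (scale c p) u = c * Poly_Mapping.lookup p u"
  unfolding scale_def by transfer (auto simp: when_def)

lemma lookup_wd: "Poly_Mapping.lookup (wd w) u = (if u = w then 1 else 0)"
  by (simp add: wd_def lookup_single when_def)

lemma lookup_prefix:
  "Poly_Mapping.lookup (prefix a p) u =
     (case u of [] \<Rightarrow> 0 | c # w \<Rightarrow> if c = a then Poly_Mapping.lookup p w else 0)"
proof -
  have "Poly_Mapping.lookup (prefix a p) u =
      (\<Sum>w\<in>Poly_Mapping.keys p. Poly_Mapping.lookup p w when a # w = u)"
    unfolding prefix_def by (simp add: lookup_sum lookup_single)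
  also have "\<dots> = (case u of [] \<Rightarrow> 0 | c # w \<Rightarrow> if c = a then Poly_Mapping.lookup p w else 0)"
  proof (cases u)
    case (Cons c w)
    then have "(\<Sum>w'\<in>Poly_Mapping.keys p. Poly_Mapping.lookup p w' when a # w' = u) =
        (\<Sum>w'\<in>Poly_Mapping.keys p. if c = a \<and> w' = w then Poly_Mapping.lookup p w' else 0)"
      by (intro sum.cong) (auto simp: when_def)
    with Cons show ?thesis
      by (simp add: sum.delta in_keys_iff)
  qed (simp add: when_def)
  finally show ?thesis .
qed

lemmas lookup_simps = lookup_add lookup_minus lookup_wd lookup_prefix

lemma prefix_diff [simp]: "prefix a (p - r) = prefix a p - prefix a r"
  by (rule poly_mapping_eqI) (simp add: lookup_simps split: list.split)

lemma prefix_scale [simp]: "prefix a (scale c p) = scale c (prefix a p)"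
  by (rule poly_mapping_eqI) (simp add: lookup_prefix split: list.split)

lemma prefix_wd [simp]: "prefix a (wd w) = wd (a # w)"
  by (rule poly_mapping_eqI) (auto simp: lookup_simps split: list.split)

lemma scale_one [simp]: "scale 1 p = p"
  by (rule poly_mapping_eqI) simp

lemma star_wd: "star q (wd u) (wd v) = qsh q u v"
  by (simp add: star_def wd_def)

lemma comm_swap: "comm q p r = - comm q r p"
  by (simp add: comm_def)

lemma ip_same: "ip a a = 2"
  and ip_neq: "a \<noteq> b \<Longrightarrow> ip a b = -2"
  by (simp_all add: ip_def)

lemma alt_Suc_neq: "a \<noteq> b \<Longrightarrow> alt a (Suc n) = a # alt b n"
  by (cases a; cases b) simp_all

lemma alt_Suc_0 [simp]: "alt a (Suc 0) = [a]"
  by simp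

declare alt.simps(2) [simp del]

lemma alt_Suc_Suc: "a \<noteq> b \<Longrightarrow> alt a (Suc (Suc n)) = a # b # alt a n"
  by (metis alt_Suc_neq)

lemma sum_ip_alt_even: "(\<Sum>c\<leftarrow>alt b (2 * m). ip c a) = 0"
proof (induction m)
  case (Suc m)
  obtain b' where "b \<noteq> b'" "a = b \<or> a = b'"
    by (cases a; cases b) auto
  with Suc show ?case
    by (auto simp: alt_Suc_Suc ip_def)
qed simp

lemma sum_ip_alt_odd: "a \<noteq> b \<Longrightarrow> (\<Sum>c\<leftarrow>alt b (2 * m + 1). ip c a) = -2"
  using sum_ip_alt_even[where b=a and m=m and a=a] by (simp add: alt_Suc_neq[of b a] ip_neq)

lemma powi_minus_two: "(q::'a::field) powi (-2) = inverse (q ^ 2)"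
  by (simp add: power_int_def power_inverse)

lemma powi_two: "(q::'a::field) powi 2 = q ^ 2"
  by (simp add: power_int_def)

lemma qsh_letter_Cons_Cons:
  "qsh q [a] (c # d # w) =
     wd (a # c # d # w) + scale (q powi ip a c) (wd (c # a # d # w))
     + scale (q powi ip a c * q powi ip a d) (prefix c (prefix d (qsh q [a] w)))"
  by (rule poly_mapping_eqI) (simp add: lookup_simps algebra_simps split: list.split)

lemma qsh_Cons_Cons_letter:
  "qsh q (c # d # w) [a] =
     prefix c (prefix d (qsh q w [a]))
     + scale (q powi (ip d a + (\<Sum>e\<leftarrow>w. ip e a))) (wd (c # a # d # w))
     + scale (q powi (ip c a + ip d a + (\<Sum>e\<leftarrow>w. ip e a))) (wd (a # c # d # w))"
  by (rule poly_mapping_eqI) (simp add: lookup_simps algebra_simps split: list.split)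

lemma qcomm_letter_alt_even:
  assumes "a \<noteq> b" and "q \<noteq> 0"
  shows "qcomm q (wd [a]) (wd (alt b (2 * m))) = scale (q - inverse q) (wd (alt a (2 * m + 1)))"
  unfolding qcomm_def star_wd
proof (induction m)
  case (Suc m)
  define w where "w = alt b (2 * m)"
  have weight_w: "(\<Sum>e\<leftarrow>w. ip e a) = 0"
    unfolding w_def by (rule sum_ip_alt_even)
  have "b \<noteq> a" using assms(1) by auto
  then have words: "alt b (2 * Suc m) = b # a # w" "alt a (2 * m + 1) = a # w"
      "alt a (2 * Suc m + 1) = a # b # a # w"
    unfolding w_def using assms(1) by (simp_all add: alt_Suc_Suc alt_Suc_neq)
  have step: "scale q (qsh q [a] (b # a # w)) - scale (inverse q) (qsh q (b # a # w) [a]) =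
      scale (q - inverse q) (wd (a # b # a # w)) + scale (inverse q - q) (wd (b # a # a # w))
      + prefix b (prefix a (scale q (qsh q [a] w) - scale (inverse q) (qsh q w [a])))"
    using assms \<open>b \<noteq> a\<close>
    unfolding qsh_letter_Cons_Cons qsh_Cons_Cons_letter weight_w
    by (intro poly_mapping_eqI)
      (simp add: lookup_simps ip_same ip_neq powi_minus_two powi_two field_simps power2_eq_square)
  show ?case
    unfolding words step Suc[folded w_def, unfolded words]
    by (rule poly_mapping_eqI) (simp add: lookup_simps algebra_simps)
qed (rule poly_mapping_eqI, simp add: lookup_simps algebra_simps)

lemma qcomm_alt_even_letter:
  assumes "q \<noteq> 0"
  shows "qcomm q (wd (alt a (2 * m))) (wd [a]) = scale (q - inverse q) (wd (alt a (2 * m + 1)))"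
  unfolding qcomm_def star_wd
proof (induction m)
  case (Suc m)
  obtain b where "a \<noteq> b" "b \<noteq> a"
    by (cases a) auto
  define w where "w = alt a (2 * m)"
  have weight_w: "(\<Sum>e\<leftarrow>w. ip e a) = 0"
    unfolding w_def by (rule sum_ip_alt_even)
  have words: "alt a (2 * Suc m) = a # b # w" "alt a (2 * Suc m + 1) = a # b # alt a (2 * m + 1)"
    unfolding w_def using \<open>a \<noteq> b\<close> by (simp_all add: alt_Suc_Suc)
  have step: "scale q (qsh q (a # b # w) [a]) - scale (inverse q) (qsh q [a] (a # b # w)) =
      prefix a (prefix b (scale q (qsh q w [a]) - scale (inverse q) (qsh q [a] w)))"
    using assms \<open>a \<noteq> b\<close> \<open>b \<noteq> a\<close>
    unfolding qsh_letter_Cons_Cons qsh_Cons_Cons_letter weight_w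
    by (intro poly_mapping_eqI)
      (simp add: lookup_simps ip_same ip_neq powi_minus_two powi_two field_simps power2_eq_square)
  show ?case
    unfolding words step Suc[folded w_def] by simp
qed (rule poly_mapping_eqI, simp add: lookup_simps algebra_simps)

lemma comm_letter_alt_odd:
  assumes "a \<noteq> b" and "q \<noteq> 0"
  shows "comm q (wd [a]) (wd (alt b (2 * m + 1))) =
    scale (1 - inverse (q ^ 2)) (wd (alt a (2 * Suc m)) - wd (alt b (2 * Suc m)))"
  unfolding comm_def star_wd
proof (induction m)
  case 0
  have "b \<noteq> a" using assms(1) by auto
  then have words: "alt b (2 * 0 + 1) = [b]" "alt a (2 * Suc 0) = [a, b]" "alt b (2 * Suc 0) = [b, a]"
    using alt_Suc_neq[OF assms(1)] alt_Suc_neq[OF \<open>b \<noteq> a\<close>] by (simp_all add: numeral_2_eq_2)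
  show ?case
    unfolding words using assms \<open>b \<noteq> a\<close>
    by (intro poly_mapping_eqI) (simp add: lookup_simps ip_neq powi_minus_two algebra_simps)
next
  case (Suc m)
  define w where "w = alt b (2 * m + 1)"
  have weight_w: "(\<Sum>e\<leftarrow>w. ip e a) = -2"
    unfolding w_def using assms(1) by (rule sum_ip_alt_odd)
  have "b \<noteq> a" using assms(1) by auto
  then have words: "alt b (2 * Suc m + 1) = b # a # w" "alt a (2 * Suc m) = a # w"
      "alt a (2 * Suc (Suc m)) = a # b # a # w" "alt b (2 * Suc (Suc m)) = b # a # alt b (2 * Suc m)"
    unfolding w_def using assms(1) by (simp_all add: alt_Suc_Suc alt_Suc_neq)
  have step: "qsh q [a] (b # a # w) - qsh q (b # a # w) [a] =
      scale (1 - inverse (q ^ 2)) (wd (a # b # a # w) - wd (b # a # a # w))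
      + prefix b (prefix a (qsh q [a] w - qsh q w [a]))"
    using assms \<open>b \<noteq> a\<close>
    unfolding qsh_letter_Cons_Cons qsh_Cons_Cons_letter weight_w
    by (intro poly_mapping_eqI)
      (simp add: lookup_simps ip_same ip_neq powi_minus_two powi_two field_simps power2_eq_square)
  show ?case
    unfolding words step Suc[folded w_def, unfolded words]
    by (rule poly_mapping_eqI) (simp add: lookup_simps algebra_simps)
qed

lemma words_as_alt:
  "W 0 = [X]" "W 1 = [Y]"
  "W (int k + 1) = alt Y (2 * k + 1)" "W (- int k) = alt X (2 * k + 1)"
  "W (- int k - 1) = alt X (2 * Suc k + 1)" "W (int k + 2) = alt Y (2 * Suc k + 1)"
  "G (k + 1) = alt Y (2 * Suc k)" "Gt (k + 1) = alt X (2 * Suc k)"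
  by (simp_all add: W_def G_def Gt_def nat_add_distrib nat_diff_distrib)

theorem proposition5p7:
  fixes q :: "'a::field" and k :: nat
  assumes "q \<noteq> 0" and "\<forall>n::nat. n > 0 \<longrightarrow> q ^ n \<noteq> 1"
  shows "comm q (wd (W 0)) (wd (W (int k + 1))) = comm q (wd (W (- int k))) (wd (W 1))
       \<and> comm q (wd (W (- int k))) (wd (W 1))
           = scale (1 - inverse (q ^ 2)) (wd (Gt (k + 1)) - wd (G (k + 1)))
       \<and> qcomm q (wd (W 0)) (wd (G (k + 1))) = qcomm q (wd (Gt (k + 1))) (wd (W 0))
       \<and> qcomm q (wd (Gt (k + 1))) (wd (W 0)) = scale (q - inverse q) (wd (W (- int k - 1)))
       \<and> qcomm q (wd (G (k + 1))) (wd (W 1)) = qcomm q (wd (W 1)) (wd (Gt (k + 1)))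
       \<and> qcomm q (wd (W 1)) (wd (Gt (k + 1))) = scale (q - inverse q) (wd (W (int k + 2)))"
proof -
  have XY: "X \<noteq> Y" "Y \<noteq> X" by simp_all
  have comm_X: "comm q (wd (W 0)) (wd (W (int k + 1))) =
      scale (1 - inverse (q ^ 2)) (wd (Gt (k + 1)) - wd (G (k + 1)))"
    unfolding words_as_alt by (rule comm_letter_alt_odd[OF XY(1) assms(1)])
  have comm_Y: "comm q (wd (W (- int k))) (wd (W 1)) =
      scale (1 - inverse (q ^ 2)) (wd (Gt (k + 1)) - wd (G (k + 1)))"
    using comm_letter_alt_odd[OF XY(2) assms(1), of k]
    unfolding words_as_alt comm_swap[of q "wd (alt X _)"]
    by (intro poly_mapping_eqI) (simp add: lookup_simps algebra_simps)
  show ?thesis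
    using comm_X comm_Y
      qcomm_letter_alt_even[OF XY(1) assms(1), of "Suc k"]
      qcomm_letter_alt_even[OF XY(2) assms(1), of "Suc k"]
      qcomm_alt_even_letter[OF assms(1), of X "Suc k"]
      qcomm_alt_even_letter[OF assms(1), of Y "Suc k"]
    unfolding words_as_alt by simp
qed

end
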